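(* The quantum channel $\Pi(\rho)=\sum_{i=1}^d\langle i|\rho|i\rangle\,\tau_i$ is the unique quantum channel $\mathcal P$ on $S$ that (1) is activity breaking; (2) satisfies $\mathcal P(\mathsf{St}(S))=\mathsf P(S)$; (3) is covariant under the time evolution, i.e. $\mathcal U_t\circ\mathcal P=\mathcal P\circ\mathcal U_t$ for all $t\in\mathbb R$, where $\mathcal U_t(\rho)=e^{-itH}\rho e^{itH}$; and (4) preserves the energy ordering of the eigenstates, i.e. $\mathrm{Tr}[H\mathcal P(|i\rangle\langle i|)]\le\mathrm{Tr}[H\mathcal P(|j\rangle\langle j|)]$ for all $i\le j$.
   Context: $S$ is a $d$-dimensional quantum system with non-degenerate Hamiltonian $H=\sum_i E_i|i\rangle\langle i|$, $E_1<\dots<E_d$. $\mathsf{St}(S)$ is the set of density matrices; $\mathsf P(S)$ is the set of passive states, i.e. states $\sum_ip_i|i\rangle\langle i|$ with $p_1\ge\dots\ge p_d$. A channel is activity breaking if it maps every state into $\mathsf P(S)$. For $j=1,\dots,d$, $\tau_j=\frac1j\sum_{i=1}^j|i\rangle\langle i|$. *)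

theory Defs
  imports "Jordan_Normal_Form.Matrix" "HOL-Library.Complex_Order"
begin

(* All indices are 0-based: the paper's basis vector |i>, i = 1..d, is our index i-1 < d. *)

definition trace :: "complex mat \<Rightarrow> complex" where
  "trace A = (\<Sum>i<dim_row A. A $$ (i,i))"

definition ketbra :: "complex vec \<Rightarrow> complex mat" where
  "ketbra v = mat (dim_vec v) (dim_vec v) (\<lambda>(a,b). v $ a * cnj (v $ b))"

definition proj :: "nat \<Rightarrow> nat \<Rightarrow> complex mat" where
  "proj d i = ketbra (unit_vec d i)"

definition matsum :: "nat \<Rightarrow> ('i \<Rightarrow> complex mat) \<Rightarrow> 'i set \<Rightarrow> complex mat" where
  "matsum d f I = mat d d (\<lambda>(a,b). \<Sum>i\<in>I. f i $$ (a,b))"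

definition hamiltonian :: "nat \<Rightarrow> (nat \<Rightarrow> real) \<Rightarrow> complex mat" where
  "hamiltonian d E = matsum d (\<lambda>i. complex_of_real (E i) \<cdot>\<^sub>m proj d i) {..<d}"

(* e^{-itH} = sum_i e^{-i t E_i} |i><i|  (H is diagonal) *)
definition evol :: "nat \<Rightarrow> (nat \<Rightarrow> real) \<Rightarrow> real \<Rightarrow> complex mat" where
  "evol d E t = matsum d (\<lambda>i. exp (- \<i> * complex_of_real (t * E i)) \<cdot>\<^sub>m proj d i) {..<d}"

definition U_t :: "nat \<Rightarrow> (nat \<Rightarrow> real) \<Rightarrow> real \<Rightarrow> complex mat \<Rightarrow> complex mat" where
  "U_t d E t \<rho> = evol d E t * \<rho> * evol d E (- t)"

definition psd :: "nat \<Rightarrow> complex mat \<Rightarrow> bool" where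
  "psd n M \<longleftrightarrow> M \<in> carrier_mat n n \<and>
     (\<forall>v \<in> carrier_vec n. (0::complex) \<le> (\<Sum>a<n. \<Sum>b<n. cnj (v $ a) * M $$ (a,b) * v $ b))"

definition states :: "nat \<Rightarrow> complex mat set" where
  "states d = {\<rho>. psd d \<rho> \<and> trace \<rho> = 1}"

definition passive_states :: "nat \<Rightarrow> complex mat set" where
  "passive_states d = {\<rho> \<in> states d. (\<forall>a<d. \<forall>b<d. a \<noteq> b \<longrightarrow> \<rho> $$ (a,b) = 0) \<and>
      (\<forall>i j. i \<le> j \<longrightarrow> j < d \<longrightarrow> Re (\<rho> $$ (j,j)) \<le> Re (\<rho> $$ (i,i)))}"

(* block (a,b) (size d x d) of a (k*d) x (k*d) matrix on C^k \<otimes> C^d *)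
definition block :: "nat \<Rightarrow> complex mat \<Rightarrow> nat \<Rightarrow> nat \<Rightarrow> complex mat" where
  "block d M a b = mat d d (\<lambda>(x,y). M $$ (a*d + x, b*d + y))"

(* id_k \<otimes> P *)
definition ampl :: "nat \<Rightarrow> nat \<Rightarrow> (complex mat \<Rightarrow> complex mat) \<Rightarrow> complex mat \<Rightarrow> complex mat" where
  "ampl d k P M = mat (k*d) (k*d)
     (\<lambda>(r,c). P (block d M (r div d) (c div d)) $$ (r mod d, c mod d))"

definition completely_positive :: "nat \<Rightarrow> (complex mat \<Rightarrow> complex mat) \<Rightarrow> bool" where
  "completely_positive d P \<longleftrightarrow> (\<forall>k M. psd (k*d) M \<longrightarrow> psd (k*d) (ampl d k P M))"

definition quantum_channel :: "nat \<Rightarrow> (complex mat \<Rightarrow> complex mat) \<Rightarrow> bool" where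
  "quantum_channel d P \<longleftrightarrow>
     (\<forall>A \<in> carrier_mat d d. P A \<in> carrier_mat d d) \<and>
     (\<forall>A \<in> carrier_mat d d. \<forall>B \<in> carrier_mat d d. P (A + B) = P A + P B) \<and>
     (\<forall>A \<in> carrier_mat d d. \<forall>c. P (c \<cdot>\<^sub>m A) = c \<cdot>\<^sub>m P A) \<and>
     (\<forall>A \<in> carrier_mat d d. trace (P A) = trace A) \<and>
     completely_positive d P"

definition activity_breaking :: "nat \<Rightarrow> (complex mat \<Rightarrow> complex mat) \<Rightarrow> bool" where
  "activity_breaking d P \<longleftrightarrow> (\<forall>\<rho> \<in> states d. P \<rho> \<in> passive_states d)"

(* tau_j = (1/j) sum_{i=1}^j |i><i|, paper index j = our j+1 *)
definition tau :: "nat \<Rightarrow> nat \<Rightarrow> complex mat" where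
  "tau d j = (1 / of_nat (j+1)) \<cdot>\<^sub>m matsum d (proj d) {..j}"

definition Pi_ch :: "nat \<Rightarrow> complex mat \<Rightarrow> complex mat" where
  "Pi_ch d \<rho> = matsum d (\<lambda>i. \<rho> $$ (i,i) \<cdot>\<^sub>m tau d i) {..<d}"

definition characterizing_props :: "nat \<Rightarrow> (nat \<Rightarrow> real) \<Rightarrow> (complex mat \<Rightarrow> complex mat) \<Rightarrow> bool" where
  "characterizing_props d E P \<longleftrightarrow>
     quantum_channel d P \<and>
     activity_breaking d P \<and>
     P ` states d = passive_states d \<and>
     (\<forall>t::real. \<forall>\<rho> \<in> carrier_mat d d. U_t d E t (P \<rho>) = P (U_t d E t \<rho>)) \<and>
     (\<forall>i j. i \<le> j \<longrightarrow> j < d \<longrightarrow>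
        Re (trace (hamiltonian d E * P (proj d i))) \<le> Re (trace (hamiltonian d E * P (proj d j))))"

end

theory Submission
  imports Defs
begin

text \<open>\<open>\<Pi>\<close> reads off the populations \<open>\<langle>i|\<rho>|i\<rangle>\<close> and prepares \<open>\<tau>\<^sub>i\<close>. As a
  measure-and-prepare map with non-negative, column-stochastic weights that decrease along the energy
  levels, it is a channel whose image is exactly the passive states, and it commutes with the time
  evolution because it only sees populations.

  Conversely, let \<open>P\<close> have the four properties. Since \<open>P\<close> outputs diagonal matrices and commutes with
  the evolution, it annihilates every coherence \<open>|a\<rangle>\<langle>b|\<close> (as \<open>E\<^sub>a \<noteq> E\<^sub>b\<close>), so
  \<open>P \<rho> = \<Sum>\<^sub>i \<langle>i|\<rho>|i\<rangle> \<sigma>\<^sub>i\<close> with passive \<open>\<sigma>\<^sub>i = P |i\<rangle>\<langle>i|\<close>. By surjectivity each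
  \<open>\<tau>\<^sub>j\<close> is a convex combination of the \<open>\<sigma>\<^sub>i\<close>; being an extreme point of the passive states,
  it equals \<open>\<sigma>\<^sub>i\<close> for some \<open>i = f j\<close>. The energy of \<open>\<tau>\<^sub>j\<close> is the mean of the \<open>j\<close> lowest levels,
  strictly increasing in \<open>j\<close>, so the energy ordering makes \<open>f\<close> strictly increasing, i.e. the
  identity, and \<open>P = \<Pi>\<close>.\<close>

definition matrix_unit :: "nat \<Rightarrow> nat \<times> nat \<Rightarrow> complex mat" where
  "matrix_unit d p = mat d d (\<lambda>q. if q = p then 1 else 0)"

lemma matsum_carrier [simp]: "matsum d f I \<in> carrier_mat d d"
  by (simp add: matsum_def)

lemma dim_matsum [simp]: "dim_row (matsum d f I) = d" "dim_col (matsum d f I) = d"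
  by (simp_all add: matsum_def)

lemma index_matsum [simp]:
  "x < d \<Longrightarrow> y < d \<Longrightarrow> matsum d f I $$ (x,y) = (\<Sum>i\<in>I. f i $$ (x,y))"
  by (simp add: matsum_def)

lemma matrix_unit_carrier [simp]: "matrix_unit d p \<in> carrier_mat d d"
  by (simp add: matrix_unit_def)

lemma dim_matrix_unit [simp]: "dim_row (matrix_unit d p) = d" "dim_col (matrix_unit d p) = d"
  by (simp_all add: matrix_unit_def)

lemma index_matrix_unit [simp]:
  "x < d \<Longrightarrow> y < d \<Longrightarrow> matrix_unit d p $$ (x,y) = (if (x,y) = p then 1 else 0)"
  by (simp add: matrix_unit_def)

lemma proj_eq_matrix_unit: "proj d i = matrix_unit d (i,i)"
  by (rule eq_matI) (auto simp: proj_def ketbra_def unit_vec_def)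

lemma proj_carrier [simp]: "proj d i \<in> carrier_mat d d"
  by (simp add: proj_eq_matrix_unit)

lemma dim_proj [simp]: "dim_row (proj d i) = d" "dim_col (proj d i) = d"
  by (simp_all add: proj_eq_matrix_unit)

lemma index_proj:
  "x < d \<Longrightarrow> y < d \<Longrightarrow> proj d i $$ (x,y) = (if x = i \<and> y = i then 1 else 0)"
  by (simp add: proj_eq_matrix_unit)

lemma index_matsum_proj:
  assumes "x < d" "y < d" "finite I"
  shows "matsum d (\<lambda>i. c i \<cdot>\<^sub>m proj d i) I $$ (x,y) = (if x = y \<and> x \<in> I then c x else 0)"
proof -
  have "(\<Sum>i\<in>I. (c i \<cdot>\<^sub>m proj d i) $$ (x,y)) = (\<Sum>i\<in>I. if i = x then (if x = y then c x else 0) else 0)"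
    using assms by (intro sum.cong) (auto simp: index_proj)
  then show ?thesis
    using assms by (simp add: sum.delta')
qed

lemma dim_hamiltonian [simp]: "dim_row (hamiltonian d E) = d" "dim_col (hamiltonian d E) = d"
  by (simp_all add: hamiltonian_def)

lemma index_hamiltonian:
  "x < d \<Longrightarrow> y < d \<Longrightarrow> hamiltonian d E $$ (x,y) = (if x = y then complex_of_real (E x) else 0)"
  by (simp add: hamiltonian_def index_matsum_proj del: index_matsum)

lemma dim_evol [simp]: "dim_row (evol d E t) = d" "dim_col (evol d E t) = d"
  by (simp_all add: evol_def)

lemma index_evol:
  "x < d \<Longrightarrow> y < d \<Longrightarrow> evol d E t $$ (x,y) = (if x = y then cis (- (t * E x)) else 0)"
  by (simp add: evol_def index_matsum_proj cis_conv_exp del: index_matsum)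

lemma dim_tau [simp]: "dim_row (tau d j) = d" "dim_col (tau d j) = d"
  by (simp_all add: tau_def)

lemma tau_carrier [simp]: "tau d j \<in> carrier_mat d d"
  by (simp add: tau_def)

lemma index_tau:
  "x < d \<Longrightarrow> y < d \<Longrightarrow> tau d j $$ (x,y) = (if x = y \<and> x \<le> j then 1 / of_nat (j+1) else 0)"
  using index_matsum_proj[of x d y "{..j}" "\<lambda>_. 1"] by (simp add: tau_def)

lemma dim_U_t [simp]: "dim_row (U_t d E t \<rho>) = d" "dim_col (U_t d E t \<rho>) = d"
  by (simp_all add: U_t_def)

lemma index_U_t:
  assumes "\<rho> \<in> carrier_mat d d" "x < d" "y < d"
  shows "U_t d E t \<rho> $$ (x,y) = cis (t * (E y - E x)) * \<rho> $$ (x,y)"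
proof -
  have "U_t d E t \<rho> $$ (x,y) = (\<Sum>l<d. (\<Sum>k<d. evol d E t $$ (x,k) * \<rho> $$ (k,l)) * evol d E (-t) $$ (l,y))"
    using assms by (simp add: U_t_def index_mult_mat scalar_prod_def atLeast0LessThan)
  also have "\<dots> = (\<Sum>l<d. if l = y then cis (- (t * E x)) * \<rho> $$ (x,l) * cis (t * E y) else 0)"
  proof (rule sum.cong [OF refl])
    fix l assume "l \<in> {..<d}"
    then have "(\<Sum>k<d. evol d E t $$ (x,k) * \<rho> $$ (k,l)) = cis (- (t * E x)) * \<rho> $$ (x,l)"
      using assms by (simp add: index_evol if_distrib[of "\<lambda>z. z * _"] sum.delta' cong: if_cong)
    then show "(\<Sum>k<d. evol d E t $$ (x,k) * \<rho> $$ (k,l)) * evol d E (-t) $$ (l,y) =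
      (if l = y then cis (- (t * E x)) * \<rho> $$ (x,l) * cis (t * E y) else 0)"
      using assms \<open>l \<in> {..<d}\<close> by (simp add: index_evol)
  qed
  also have "\<dots> = cis (- (t * E x)) * \<rho> $$ (x,y) * cis (t * E y)"
    using assms by simp
  also have "\<dots> = cis (t * (E y - E x)) * \<rho> $$ (x,y)"
    by (simp add: cis_mult algebra_simps)
  finally show ?thesis .
qed

lemma U_t_diagonal:
  assumes "\<rho> \<in> carrier_mat d d" "diagonal_mat \<rho>"
  shows "U_t d E t \<rho> = \<rho>"
proof (rule eq_matI)
  fix x y assume "x < dim_row \<rho>" "y < dim_col \<rho>"
  with assms show "U_t d E t \<rho> $$ (x,y) = \<rho> $$ (x,y)"
    by (cases "x = y") (auto simp: index_U_t diagonal_mat_def)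
qed (use assms in auto)

section \<open>Linear maps on matrices\<close>

definition mat_linear :: "nat \<Rightarrow> (complex mat \<Rightarrow> complex mat) \<Rightarrow> bool" where
  "mat_linear d P \<longleftrightarrow>
     (\<forall>A \<in> carrier_mat d d. P A \<in> carrier_mat d d) \<and>
     (\<forall>A \<in> carrier_mat d d. \<forall>B \<in> carrier_mat d d. P (A + B) = P A + P B) \<and>
     (\<forall>A \<in> carrier_mat d d. \<forall>c. P (c \<cdot>\<^sub>m A) = c \<cdot>\<^sub>m P A)"

lemma quantum_channel_imp_mat_linear: "quantum_channel d P \<Longrightarrow> mat_linear d P"
  by (simp add: quantum_channel_def mat_linear_def)

lemma matsum_matrix_units:
  "A \<in> carrier_mat d d \<Longrightarrow> A = matsum d (\<lambda>p. A $$ p \<cdot>\<^sub>m matrix_unit d p) ({..<d} \<times> {..<d})"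
  by (rule eq_matI) (auto simp: sum.delta' if_distrib[of "(*) _"] cong: if_cong)

context
  fixes d P assumes P: "mat_linear d P"
begin

lemma mat_linear_carrier: "A \<in> carrier_mat d d \<Longrightarrow> P A \<in> carrier_mat d d"
  using P by (simp add: mat_linear_def)

lemma mat_linear_add:
  "A \<in> carrier_mat d d \<Longrightarrow> B \<in> carrier_mat d d \<Longrightarrow> P (A + B) = P A + P B"
  using P by (simp add: mat_linear_def)

lemma mat_linear_smult: "A \<in> carrier_mat d d \<Longrightarrow> P (c \<cdot>\<^sub>m A) = c \<cdot>\<^sub>m P A"
  using P by (simp add: mat_linear_def)

lemma mat_linear_zero: "P (0\<^sub>m d d) = 0\<^sub>m d d"
proof -
  have "P (0\<^sub>m d d) = P ((0::complex) \<cdot>\<^sub>m 0\<^sub>m d d)" by simp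
  also have "\<dots> = 0 \<cdot>\<^sub>m P (0\<^sub>m d d)" by (rule mat_linear_smult) simp
  also have "\<dots> = 0\<^sub>m d d"
    using mat_linear_carrier[of "0\<^sub>m d d"] by (intro eq_matI) auto
  finally show ?thesis .
qed

lemma mat_linear_matsum:
  assumes "finite I" "\<And>i. i \<in> I \<Longrightarrow> f i \<in> carrier_mat d d"
  shows "P (matsum d f I) = matsum d (\<lambda>i. P (f i)) I"
  using assms
proof (induction I rule: finite_induct)
  case empty
  have empty: "matsum d g {} = 0\<^sub>m d d" for g by (rule eq_matI) auto
  show ?case by (simp only: empty mat_linear_zero)
next
  case (insert i I)
  have split: "matsum d g (insert i I) = g i + matsum d g I" if "g i \<in> carrier_mat d d" for g
    using insert.hyps that by (intro eq_matI) auto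
  show ?case
    using insert by (simp add: split mat_linear_add mat_linear_carrier)
qed

lemma mat_linear_expand:
  assumes "A \<in> carrier_mat d d"
  shows "P A = matsum d (\<lambda>p. A $$ p \<cdot>\<^sub>m P (matrix_unit d p)) ({..<d} \<times> {..<d})"
proof -
  have "P A = P (matsum d (\<lambda>p. A $$ p \<cdot>\<^sub>m matrix_unit d p) ({..<d} \<times> {..<d}))"
    by (rule arg_cong [OF matsum_matrix_units [OF assms]])
  also have "\<dots> = matsum d (\<lambda>p. P (A $$ p \<cdot>\<^sub>m matrix_unit d p)) ({..<d} \<times> {..<d})"
    by (rule mat_linear_matsum) auto
  finally show ?thesis
    by (simp add: mat_linear_smult)
qed

end

section \<open>Positive semidefinite matrices and states\<close>

abbreviation qform :: "nat \<Rightarrow> complex mat \<Rightarrow> complex vec \<Rightarrow> complex" where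
  "qform n M v \<equiv> \<Sum>a<n. \<Sum>b<n. cnj (v $ a) * M $$ (a,b) * v $ b"

lemma psd_carrier: "psd n M \<Longrightarrow> M \<in> carrier_mat n n"
  by (simp add: psd_def)

lemma psd_diag_nonneg:
  assumes "psd d \<rho>" "i < d"
  shows "0 \<le> \<rho> $$ (i,i)"
proof -
  have "0 \<le> qform d \<rho> (unit_vec d i)"
    using assms(1) unfolding psd_def by auto
  also have "qform d \<rho> (unit_vec d i) = (\<Sum>a<d. \<Sum>b<d. if a = i \<and> b = i then \<rho> $$ (i,i) else 0)"
    by (intro sum.cong refl) (auto simp: unit_vec_def)
  also have "\<dots> = (\<Sum>a<d. if a = i then (\<Sum>b<d. if b = i then \<rho> $$ (i,i) else 0) else 0)"
    by (intro sum.cong) auto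
  also have "\<dots> = \<rho> $$ (i,i)"
    using assms(2) by simp
  finally show ?thesis .
qed

lemma psd_ketbra:
  assumes "dim_vec w = n"
  shows "psd n (ketbra w)"
  unfolding psd_def
proof (intro conjI ballI)
  fix v :: "complex vec"
  define z where "z = (\<Sum>a<n. cnj (v $ a) * w $ a)"
  have "qform n (ketbra w) v = (\<Sum>a<n. \<Sum>b<n. (cnj (v $ a) * w $ a) * cnj (cnj (v $ b) * w $ b))"
    using assms by (intro sum.cong refl) (simp add: ketbra_def)
  also have "\<dots> = z * cnj z"
    by (simp add: z_def sum_product cnj_sum)
  finally show "0 \<le> qform n (ketbra w) v"
    by (simp add: less_eq_complex_def)
qed (use assms in \<open>simp add: ketbra_def\<close>)

lemma psd_smult:
  assumes "psd n M" "0 \<le> c"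
  shows "psd n (c \<cdot>\<^sub>m M)"
  unfolding psd_def
proof (intro conjI ballI)
  fix v :: "complex vec" assume "v \<in> carrier_vec n"
  have "qform n (c \<cdot>\<^sub>m M) v = c * qform n M v"
    using psd_carrier [OF assms(1)] by (simp add: sum_distrib_left ac_simps)
  also have "0 \<le> \<dots>"
    using assms \<open>v \<in> carrier_vec n\<close> unfolding psd_def by (intro mult_nonneg_nonneg) auto
  finally show "0 \<le> qform n (c \<cdot>\<^sub>m M) v" .
qed (use psd_carrier [OF assms(1)] in simp)

lemma psd_diagonal:
  assumes "D \<in> carrier_mat n n" "diagonal_mat D" "\<And>x. x < n \<Longrightarrow> 0 \<le> D $$ (x,x)"
  shows "psd n D"
  unfolding psd_def
proof (intro conjI ballI)
  fix v :: "complex vec"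
  have "qform n D v = (\<Sum>a<n. \<Sum>b<n. if b = a then D $$ (a,a) * (cnj (v $ a) * v $ a) else 0)"
    using assms(1,2) unfolding diagonal_mat_def by (intro sum.cong refl) auto
  also have "\<dots> = (\<Sum>a<n. D $$ (a,a) * (cnj (v $ a) * v $ a))"
    by simp
  also have "0 \<le> \<dots>"
    by (intro sum_nonneg mult_nonneg_nonneg [OF assms(3)]) (auto simp: less_eq_complex_def)
  finally show "0 \<le> qform n D v" .
qed (rule assms(1))

lemma state_carrier: "\<rho> \<in> states d \<Longrightarrow> \<rho> \<in> carrier_mat d d"
  by (simp add: states_def psd_def)

lemma state_diag_nonneg: "\<rho> \<in> states d \<Longrightarrow> i < d \<Longrightarrow> 0 \<le> \<rho> $$ (i,i)"
  by (rule psd_diag_nonneg) (auto simp: states_def)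

lemma passive_imp_state: "\<rho> \<in> passive_states d \<Longrightarrow> \<rho> \<in> states d"
  by (simp add: passive_states_def)

lemma passive_diagonal: "\<rho> \<in> passive_states d \<Longrightarrow> diagonal_mat \<rho>"
  by (auto simp: passive_states_def diagonal_mat_def dest: state_carrier)

lemma proj_state: "i < d \<Longrightarrow> proj d i \<in> states d"
proof -
  assume "i < d"
  have "trace (proj d i) = (\<Sum>x<d. if x = i then 1 else 0)"
    unfolding trace_def by (intro sum.cong) (auto simp: index_proj)
  with \<open>i < d\<close> show ?thesis
    by (simp add: states_def proj_def psd_ketbra)
qed

section \<open>Measure-and-prepare maps\<close>

text \<open>\<open>\<rho> \<mapsto> \<Sum>\<^sub>i \<rho>\<^sub>i\<^sub>i D\<^sub>i\<close> with diagonal outputs \<open>D\<^sub>i\<close> whose \<open>x\<close>-th entry is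
  \<open>c x i\<close>; \<open>\<Pi>\<close> is the instance \<open>D\<^sub>i = \<tau>\<^sub>i\<close>.\<close>

definition classical_map :: "nat \<Rightarrow> (nat \<Rightarrow> nat \<Rightarrow> complex) \<Rightarrow> complex mat \<Rightarrow> complex mat" where
  "classical_map d c \<rho> = mat d d (\<lambda>(x,y). if x = y then \<Sum>i<d. c x i * \<rho> $$ (i,i) else 0)"

lemma classical_map_carrier [simp]: "classical_map d c \<rho> \<in> carrier_mat d d"
  by (simp add: classical_map_def)

lemma dim_classical_map [simp]:
  "dim_row (classical_map d c \<rho>) = d" "dim_col (classical_map d c \<rho>) = d"
  by (simp_all add: classical_map_def)

lemma index_classical_map [simp]:
  "x < d \<Longrightarrow> y < d \<Longrightarrow>
   classical_map d c \<rho> $$ (x,y) = (if x = y then \<Sum>i<d. c x i * \<rho> $$ (i,i) else 0)"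
  by (simp add: classical_map_def)

lemma classical_map_diagonal: "diagonal_mat (classical_map d c \<rho>)"
  by (simp add: diagonal_mat_def)

lemma classical_map_mat_linear: "mat_linear d (classical_map d c)"
  by (auto simp: mat_linear_def intro!: eq_matI simp: sum.distrib sum_distrib_left algebra_simps)

lemma trace_classical_map:
  assumes "\<And>i. i < d \<Longrightarrow> (\<Sum>x<d. c x i) = 1" "\<rho> \<in> carrier_mat d d"
  shows "trace (classical_map d c \<rho>) = trace \<rho>"
proof -
  have "trace (classical_map d c \<rho>) = (\<Sum>i<d. (\<Sum>x<d. c x i) * \<rho> $$ (i,i))"
    by (simp add: trace_def sum_distrib_right) (rule sum.swap)
  with assms show ?thesis
    by (simp add: trace_def)
qed

lemma classical_map_U_t: "\<rho> \<in> carrier_mat d d \<Longrightarrow> classical_map d c (U_t d E t \<rho>) = classical_map d c \<rho>"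
  by (rule eq_matI) (auto simp: index_U_t intro!: sum.cong)

lemma sum_lessThan_add:
  fixes f :: "nat \<Rightarrow> 'a::comm_monoid_add"
  shows "(\<Sum>r<m+n. f r) = (\<Sum>r<m. f r) + (\<Sum>x<n. f (m + x))"
  by (induction n) (simp_all add: add.assoc)

lemma sum_lessThan_mult:
  fixes f :: "nat \<Rightarrow> 'a::comm_monoid_add"
  shows "(\<Sum>r<k*d. f r) = (\<Sum>a<k. \<Sum>x<d. f (a*d + x))"
proof (induction k)
  case (Suc k)
  then show ?case
    using sum_lessThan_add [of f "k*d" d] by (simp add: add.commute)
qed simp

lemma block_index_less:
  fixes a k x d :: nat
  assumes "a < k" "x < d"
  shows "a*d + x < k*d"
proof -
  have "Suc a * d \<le> k * d"
    using assms(1) by (intro mult_le_mono1) simp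
  with assms(2) show ?thesis
    by simp
qed

text \<open>The vector \<open>(1 \<otimes> |i\<rangle>\<langle>x|) v\<close> in \<open>\<complex>\<^sup>k \<otimes> \<complex>\<^sup>d\<close>.\<close>

definition block_move :: "nat \<Rightarrow> nat \<Rightarrow> nat \<Rightarrow> nat \<Rightarrow> complex vec \<Rightarrow> complex vec" where
  "block_move d k x i v = vec (k*d) (\<lambda>r. if r mod d = i then v $ (r div d * d + x) else 0)"

lemma block_move_carrier: "block_move d k x i v \<in> carrier_vec (k*d)"
  by (simp add: block_move_def)

lemma qform_block_move:
  assumes "i < d"
  shows "qform (k*d) M (block_move d k x i v) =
    (\<Sum>a<k. \<Sum>b<k. cnj (v $ (a*d + x)) * M $$ (a*d + i, b*d + i) * v $ (b*d + x))"
proof -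
  let ?g = "\<lambda>a b. cnj (v $ (a*d + x)) * M $$ (a*d + i, b*d + i) * v $ (b*d + x)"
  have "qform (k*d) M (block_move d k x i v) =
    (\<Sum>a<k. \<Sum>i'<d. \<Sum>b<k. \<Sum>j'<d. if j' = i then if i' = i then ?g a b else 0 else 0)"
    unfolding sum_lessThan_mult by (intro sum.cong refl) (auto simp: block_move_def block_index_less)
  also have "\<dots> = (\<Sum>a<k. \<Sum>b<k. ?g a b)"
    using assms by (simp add: sum.swap [where A = "{..<d}" and B = "{..<k}"] sum.delta)
  finally show ?thesis .
qed

lemma index_ampl_classical_map:
  assumes "a < k" "b < k" "x < d" "y < d"
  shows "ampl d k (classical_map d c) M $$ (a*d + x, b*d + y) =
    (if x = y then \<Sum>i<d. c x i * M $$ (a*d + i, b*d + i) else 0)"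
  using assms by (simp add: ampl_def block_def block_index_less)

text \<open>The Kraus decomposition of \<open>id \<otimes> classical_map d c\<close>, with Kraus operators
  \<open>\<surd>(c x i) (1 \<otimes> |x\<rangle>\<langle>i|)\<close>.\<close>

lemma qform_ampl_classical_map:
  "qform (k*d) (ampl d k (classical_map d c) M) v =
    (\<Sum>x<d. \<Sum>i<d. c x i * qform (k*d) M (block_move d k x i v))"
proof -
  let ?Q = "ampl d k (classical_map d c) M"
  let ?g = "\<lambda>x i a b. cnj (v $ (a*d + x)) * M $$ (a*d + i, b*d + i) * v $ (b*d + x)"
  have "qform (k*d) ?Q v =
    (\<Sum>a<k. \<Sum>x<d. \<Sum>b<k. \<Sum>y<d. if y = x then
       cnj (v $ (a*d + x)) * (\<Sum>i<d. c x i * M $$ (a*d + i, b*d + i)) * v $ (b*d + x) else 0)"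
    unfolding sum_lessThan_mult by (intro sum.cong refl) (auto simp: index_ampl_classical_map)
  also have "\<dots> = (\<Sum>a<k. \<Sum>x<d. \<Sum>b<k. \<Sum>i<d. c x i * ?g x i a b)"
    by (simp add: sum_distrib_left sum_distrib_right ac_simps)
  also have "\<dots> = (\<Sum>x<d. \<Sum>a<k. \<Sum>b<k. \<Sum>i<d. c x i * ?g x i a b)"
    by (rule sum.swap)
  also have "\<dots> = (\<Sum>x<d. \<Sum>a<k. \<Sum>i<d. \<Sum>b<k. c x i * ?g x i a b)"
    by (rule sum.cong [OF refl], rule sum.cong [OF refl], rule sum.swap)
  also have "\<dots> = (\<Sum>x<d. \<Sum>i<d. \<Sum>a<k. \<Sum>b<k. c x i * ?g x i a b)"
    by (rule sum.cong [OF refl], rule sum.swap)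
  also have "\<dots> = (\<Sum>x<d. \<Sum>i<d. c x i * (\<Sum>a<k. \<Sum>b<k. ?g x i a b))"
    by (simp add: sum_distrib_left)
  also have "\<dots> = (\<Sum>x<d. \<Sum>i<d. c x i * qform (k*d) M (block_move d k x i v))"
    by (simp add: qform_block_move)
  finally show ?thesis .
qed

lemma classical_map_completely_positive:
  assumes "\<And>x i. x < d \<Longrightarrow> i < d \<Longrightarrow> 0 \<le> c x i"
  shows "completely_positive d (classical_map d c)"
  unfolding completely_positive_def
proof (intro allI impI)
  fix k M assume M: "psd (k*d) M"
  show "psd (k*d) (ampl d k (classical_map d c) M)"
    unfolding psd_def
  proof (intro conjI ballI)
    fix v :: "complex vec"
    have Mq: "0 \<le> qform (k*d) M (block_move d k x i v)" for x i
      using M block_move_carrier unfolding psd_def by blast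
    show "0 \<le> qform (k*d) (ampl d k (classical_map d c) M) v"
      unfolding qform_ampl_classical_map
      by (rule sum_nonneg, rule sum_nonneg, rule mult_nonneg_nonneg [OF assms]) (auto simp: Mq)
  qed (simp add: ampl_def)
qed

lemma classical_map_passive:
  assumes nonneg: "\<And>x i. x < d \<Longrightarrow> i < d \<Longrightarrow> 0 \<le> c x i"
    and stochastic: "\<And>i. i < d \<Longrightarrow> (\<Sum>x<d. c x i) = 1"
    and decreasing: "\<And>x y i. x \<le> y \<Longrightarrow> y < d \<Longrightarrow> i < d \<Longrightarrow> c y i \<le> c x i"
    and "\<rho> \<in> states d"
  shows "classical_map d c \<rho> \<in> passive_states d"
proof -
  have \<rho>: "\<rho> \<in> carrier_mat d d" "\<And>i. i < d \<Longrightarrow> 0 \<le> \<rho> $$ (i,i)" "trace \<rho> = 1"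
    using assms(4) by (auto simp: state_carrier state_diag_nonneg states_def)
  have "psd d (classical_map d c \<rho>)"
    using nonneg \<rho>(2) by (intro psd_diagonal classical_map_carrier classical_map_diagonal) (auto intro: sum_nonneg)
  moreover have "trace (classical_map d c \<rho>) = 1"
    using trace_classical_map [OF stochastic \<rho>(1)] \<rho>(3) by simp
  moreover have "classical_map d c \<rho> $$ (y,y) \<le> classical_map d c \<rho> $$ (x,x)" if "x \<le> y" "y < d" for x y
    using that decreasing \<rho>(2) by (auto intro!: sum_mono mult_right_mono)
  ultimately show ?thesis
    by (auto simp: passive_states_def states_def less_eq_complex_def)
qed

section \<open>The channel \<open>\<Pi>\<close>\<close>

lemma sum_tau_diag: "j < d \<Longrightarrow> (\<Sum>x<d. tau d j $$ (x,x)) = 1"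
proof -
  assume "j < d"
  then have "{x\<in>{..<d}. x \<le> j} = {..j}"
    by auto
  then have "(\<Sum>x<d. tau d j $$ (x,x)) = (\<Sum>x\<le>j. 1 / of_nat (j+1))"
    by (simp add: index_tau sum.inter_filter [symmetric])
  moreover have "of_nat (j+1) \<noteq> (0::complex)"
    by (simp only: of_nat_eq_0_iff)
  ultimately show ?thesis
    by simp
qed

lemma Pi_ch_eq_classical_map: "Pi_ch d = classical_map d (\<lambda>x i. tau d i $$ (x,x))"
proof (intro ext eq_matI)
  fix \<rho> x y assume "x < dim_row (classical_map d (\<lambda>x i. tau d i $$ (x,x)) \<rho>)"
    "y < dim_col (classical_map d (\<lambda>x i. tau d i $$ (x,x)) \<rho>)"
  then show "Pi_ch d \<rho> $$ (x,y) = classical_map d (\<lambda>x i. tau d i $$ (x,x)) \<rho> $$ (x,y)"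
    by (auto simp: Pi_ch_def index_tau mult.commute)
qed (simp_all add: Pi_ch_def)

lemma Pi_ch_passive: "\<rho> \<in> states d \<Longrightarrow> Pi_ch d \<rho> \<in> passive_states d"
  unfolding Pi_ch_eq_classical_map
  by (rule classical_map_passive) (simp_all add: sum_tau_diag, auto simp: index_tau less_eq_complex_def)

lemma Pi_ch_quantum_channel: "quantum_channel d (Pi_ch d)"
  using classical_map_mat_linear [of d "\<lambda>x i. tau d i $$ (x,x)"]
  unfolding quantum_channel_def mat_linear_def Pi_ch_eq_classical_map
  by (auto simp: trace_classical_map sum_tau_diag intro!: classical_map_completely_positive)
    (auto simp: index_tau less_eq_complex_def)

lemma Pi_ch_covariant:
  "\<rho> \<in> carrier_mat d d \<Longrightarrow> U_t d E t (Pi_ch d \<rho>) = Pi_ch d (U_t d E t \<rho>)"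
  by (simp add: Pi_ch_eq_classical_map classical_map_U_t U_t_diagonal classical_map_diagonal)

lemma Pi_ch_proj:
  assumes "i < d"
  shows "Pi_ch d (proj d i) = tau d i"
proof (rule eq_matI)
  fix x y assume "x < dim_row (tau d i)" "y < dim_col (tau d i)"
  then have "x < d" "y < d"
    by simp_all
  have "(\<Sum>k<d. tau d k $$ (x,x) * proj d i $$ (k,k)) = (\<Sum>k<d. if k = i then tau d i $$ (x,x) else 0)"
    by (intro sum.cong) (auto simp: index_proj)
  with assms \<open>x < d\<close> \<open>y < d\<close> show "Pi_ch d (proj d i) $$ (x,y) = tau d i $$ (x,y)"
    by (cases "x = y") (simp_all add: Pi_ch_eq_classical_map index_tau [of x d y])
qed (simp_all add: Pi_ch_eq_classical_map)

lemma Pi_ch_surj: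
  assumes "p \<in> passive_states d"
  shows "p \<in> Pi_ch d ` states d"
proof -
  have p: "p \<in> carrier_mat d d" "diagonal_mat p" "\<And>i. i < d \<Longrightarrow> 0 \<le> p $$ (i,i)" "trace p = 1"
    "\<And>i j. i \<le> j \<Longrightarrow> j < d \<Longrightarrow> Re (p $$ (j,j)) \<le> Re (p $$ (i,i))"
    using assms passive_imp_state [OF assms] passive_diagonal [OF assms]
    by (auto simp: state_carrier state_diag_nonneg states_def passive_states_def)
  define q where "q i = (if i < d then p $$ (i,i) else 0)" for i
  define \<rho> where "\<rho> = mat d d (\<lambda>(x,y). if x = y then of_nat (x+1) * (q x - q (Suc x)) else 0)"
  have \<rho>_carrier: "\<rho> \<in> carrier_mat d d"
    by (simp add: \<rho>_def)
  have q_decr: "0 \<le> q i - q (Suc i)" if "i < d" for i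
    using that p(3) [of i] p(3) [of "Suc i"] p(5) [of i "Suc i"] by (auto simp: q_def less_eq_complex_def)
  have \<rho>_diag: "\<rho> $$ (i,i) = of_nat (i+1) * (q i - q (Suc i))" if "i < d" for i
    using that by (simp add: \<rho>_def)
  have "Pi_ch d \<rho> $$ (x,x) = p $$ (x,x)" if "x < d" for x
  proof -
    have "Pi_ch d \<rho> $$ (x,x) = (\<Sum>i<d. if x \<le> i then q i - q (Suc i) else 0)"
      using that by (simp add: Pi_ch_eq_classical_map index_tau \<rho>_diag del: of_nat_Suc)
        (intro sum.cong refl, simp del: of_nat_Suc)
    also have "\<dots> = (\<Sum>i\<in>{x..<d}. q i - q (Suc i))"
      by (simp add: sum.inter_filter [symmetric]) (intro sum.cong, auto)
    also have "\<dots> = q x - q d"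
      using that sum_Suc_diff' [of x d q] by (simp add: sum_subtractf) (metis minus_diff_eq)
    finally show ?thesis
      using that by (simp add: q_def)
  qed
  then have "Pi_ch d \<rho> = p"
    using p(1,2) classical_map_diagonal
    by (intro eq_matI) (auto simp: Pi_ch_eq_classical_map diagonal_mat_def)
  moreover have "\<rho> \<in> states d"
  proof -
    have "psd d \<rho>"
      using q_decr by (intro psd_diagonal) (auto simp: \<rho>_def diagonal_mat_def less_eq_complex_def)
    moreover have "trace (Pi_ch d \<rho>) = trace \<rho>"
      unfolding Pi_ch_eq_classical_map by (rule trace_classical_map [OF sum_tau_diag \<rho>_carrier])
    ultimately show ?thesis
      using \<open>Pi_ch d \<rho> = p\<close> p(4) by (simp add: states_def)
  qed
  ultimately show ?thesis
    by blast
qed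

section \<open>Energies of the states \<open>\<tau>\<^sub>j\<close>\<close>

lemma trace_hamiltonian_mult:
  assumes "A \<in> carrier_mat d d"
  shows "trace (hamiltonian d E * A) = (\<Sum>x<d. complex_of_real (E x) * A $$ (x,x))"
proof -
  have "(hamiltonian d E * A) $$ (x,x) = complex_of_real (E x) * A $$ (x,x)" if "x < d" for x
  proof -
    have "(hamiltonian d E * A) $$ (x,x) = (\<Sum>k<d. hamiltonian d E $$ (x,k) * A $$ (k,x))"
      using assms that by (simp add: index_mult_mat scalar_prod_def atLeast0LessThan)
    also have "\<dots> = (\<Sum>k<d. if k = x then complex_of_real (E x) * A $$ (x,x) else 0)"
      using that by (intro sum.cong) (auto simp: index_hamiltonian)
    finally show ?thesis
      using that by simp
  qed
  then show ?thesis
    by (simp add: trace_def hamiltonian_def)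
qed

definition prefix_mean :: "(nat \<Rightarrow> real) \<Rightarrow> nat \<Rightarrow> real" where
  "prefix_mean E j = (\<Sum>x\<le>j. E x) / real (j+1)"

lemma energy_tau: "j < d \<Longrightarrow> Re (trace (hamiltonian d E * tau d j)) = prefix_mean E j"
proof -
  assume "j < d"
  then have "{x\<in>{..<d}. x \<le> j} = {..j}"
    by auto
  then have "trace (hamiltonian d E * tau d j) = (\<Sum>x\<le>j. complex_of_real (E x) / of_nat (j+1))"
    by (simp add: trace_hamiltonian_mult index_tau sum.inter_filter [symmetric] if_distrib cong: if_cong)
  then show ?thesis
    by (simp add: prefix_mean_def sum_divide_distrib)
qed

lemma prefix_mean_Suc_less:
  assumes "\<And>x. x \<le> j \<Longrightarrow> E x < E (Suc j)"
  shows "prefix_mean E j < prefix_mean E (Suc j)"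
proof -
  define S where "S = (\<Sum>x\<le>j. E x)"
  have "S < (\<Sum>x\<le>j. E (Suc j))"
    unfolding S_def by (rule sum_strict_mono) (use assms in auto)
  then have "S < real (j+1) * E (Suc j)"
    by simp
  then have "S / real (j+1) < (S + E (Suc j)) / real (j+2)"
    by (simp add: field_simps)
  then show ?thesis
    by (simp add: prefix_mean_def S_def)
qed

lemma prefix_mean_strict_mono:
  assumes "strict_mono_on {..<d} E"
  shows "strict_mono_on {..<d} (prefix_mean E)"
proof (rule strict_mono_onI)
  fix i j assume "i \<in> {..<d}" "j \<in> {..<d}" "i < j"
  then show "prefix_mean E i < prefix_mean E j"
  proof (induction j)
    case (Suc j)
    have "prefix_mean E j < prefix_mean E (Suc j)"
      using Suc.prems by (intro prefix_mean_Suc_less strict_mono_onD [OF assms]) auto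
    with Suc show ?case
      by (cases "i = j") auto
  qed simp
qed

section \<open>Uniqueness\<close>

definition pair_state :: "nat \<Rightarrow> nat \<Rightarrow> nat \<Rightarrow> complex mat" where
  "pair_state d a b = (1/2) \<cdot>\<^sub>m ketbra (vec d (\<lambda>k. if k = a \<or> k = b then 1 else 0))"

lemma pair_state_carrier [simp]: "pair_state d a b \<in> carrier_mat d d"
  by (simp add: pair_state_def ketbra_def)

lemma index_pair_state:
  "p < d \<Longrightarrow> q < d \<Longrightarrow>
   pair_state d a b $$ (p,q) = (if (p = a \<or> p = b) \<and> (q = a \<or> q = b) then 1/2 else 0)"
  by (simp add: pair_state_def ketbra_def)

lemma pair_state_state:
  assumes "a < d" "b < d" "a \<noteq> b"
  shows "pair_state d a b \<in> states d"
proof -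
  have "psd d (pair_state d a b)"
    unfolding pair_state_def by (rule psd_smult [OF psd_ketbra]) (auto simp: less_eq_complex_def)
  moreover have "{k\<in>{..<d}. k = a \<or> k = b} = {a,b}"
    using assms by auto
  then have "trace (pair_state d a b) = (\<Sum>k\<in>{a,b}. 1/2)"
    by (simp add: trace_def index_pair_state sum.inter_filter [symmetric] carrier_matD [OF pair_state_carrier])
  ultimately show ?thesis
    using assms by (simp add: states_def)
qed

lemma U_t_pair_state:
  assumes "a \<noteq> b"
  shows "U_t d E t (pair_state d a b) = pair_state d a b +
    ((cis (t * (E b - E a)) - 1) / 2 \<cdot>\<^sub>m matrix_unit d (a,b) +
     (cis (- (t * (E b - E a))) - 1) / 2 \<cdot>\<^sub>m matrix_unit d (b,a))"
  (is "_ = ?R")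
proof (rule eq_matI)
  fix p q assume "p < dim_row ?R" "q < dim_col ?R"
  then have "p < d" "q < d"
    by auto
  with assms show "U_t d E t (pair_state d a b) $$ (p,q) = ?R $$ (p,q)"
    by (auto simp: index_U_t index_pair_state diff_divide_distrib algebra_simps)
qed auto

text \<open>For the state \<open>\<rho> = pair_state d a b\<close> the output \<open>P \<rho>\<close> is diagonal, hence
  \<open>P (U_t \<rho>) = U_t (P \<rho>) = P \<rho>\<close>. As \<open>U_t \<rho> - \<rho>\<close> is a combination of \<open>|a\<rangle>\<langle>b|\<close> and
  \<open>|b\<rangle>\<langle>a|\<close> with coefficients depending on the phase \<open>t (E\<^sub>b - E\<^sub>a)\<close>, the phases \<open>\<pi>\<close> and
  \<open>\<pi>/2\<close> give two independent linear relations between their images.\<close>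

lemma offdiag_matrix_unit_vanish:
  assumes P: "mat_linear d P"
    and diag: "\<And>\<rho>. \<rho> \<in> states d \<Longrightarrow> diagonal_mat (P \<rho>)"
    and cov: "\<And>t \<rho>. \<rho> \<in> carrier_mat d d \<Longrightarrow> U_t d E t (P \<rho>) = P (U_t d E t \<rho>)"
    and ab: "a < d" "b < d" "E a \<noteq> E b"
  shows "P (matrix_unit d (a,b)) = 0\<^sub>m d d"
proof (rule eq_matI)
  have "a \<noteq> b"
    using ab(3) by auto
  define \<rho> where "\<rho> = pair_state d a b"
  define \<alpha> where "\<alpha> s = (cis s - 1) / 2" for s
  define \<omega> where "\<omega> = E b - E a"
  have "\<omega> \<noteq> 0"
    using ab(3) by (simp add: \<omega>_def)
  have P\<rho>: "P \<rho> \<in> carrier_mat d d" "diagonal_mat (P \<rho>)"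
    using mat_linear_carrier [OF P] diag pair_state_state [OF ab(1,2) \<open>a \<noteq> b\<close>] by (simp_all add: \<rho>_def)
  have PE: "P (matrix_unit d p) \<in> carrier_mat d d" for p
    by (rule mat_linear_carrier [OF P matrix_unit_carrier])
  have invariant: "P \<rho> + (\<alpha> (t * \<omega>) \<cdot>\<^sub>m P (matrix_unit d (a,b)) + \<alpha> (- (t * \<omega>)) \<cdot>\<^sub>m P (matrix_unit d (b,a))) = P \<rho>"
    for t
    using cov [of \<rho> t] U_t_diagonal [OF P\<rho>] U_t_pair_state [OF \<open>a \<noteq> b\<close>, of d E t]
    by (simp add: \<rho>_def \<alpha>_def \<omega>_def mat_linear_add [OF P] mat_linear_smult [OF P] PE)
  have balance: "\<alpha> (t * \<omega>) * P (matrix_unit d (a,b)) $$ (x,y) + \<alpha> (- (t * \<omega>)) * P (matrix_unit d (b,a)) $$ (x,y) = 0"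
    if "x < d" "y < d" for t x y
    using arg_cong [where f = "\<lambda>M. M $$ (x,y)", OF invariant [of t]] that PE [of "(a,b)"] PE [of "(b,a)"] P\<rho>(1)
    by simp
  fix x y assume "x < dim_row (0\<^sub>m d d :: complex mat)" "y < dim_col (0\<^sub>m d d :: complex mat)"
  then have xy: "x < d" "y < d"
    by simp_all
  define X Y where "X = P (matrix_unit d (a,b)) $$ (x,y)" and "Y = P (matrix_unit d (b,a)) $$ (x,y)"
  have "\<alpha> pi * X + \<alpha> (- pi) * Y = 0" "\<alpha> (pi/2) * X + \<alpha> (- (pi/2)) * Y = 0"
    using balance [OF xy, of "pi / \<omega>"] balance [OF xy, of "pi / 2 / \<omega>"] \<open>\<omega> \<noteq> 0\<close>
    by (simp_all add: X_def Y_def)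
  moreover have "\<alpha> pi = -1" "\<alpha> (- pi) = -1" "\<alpha> (pi/2) = (\<i> - 1) / 2" "\<alpha> (- (pi/2)) = (- \<i> - 1) / 2"
    by (simp_all add: \<alpha>_def complex_eq_iff)
  ultimately have "Y = - X" "(\<i> - 1) / 2 * X + (- \<i> - 1) / 2 * Y = 0"
    by (simp_all add: add_eq_0_iff)
  then have "\<i> * X = 0"
    by (simp add: field_simps)
  with xy show "P (matrix_unit d (a,b)) $$ (x,y) = 0\<^sub>m d d $$ (x,y)"
    by (simp add: X_def)
qed (use mat_linear_carrier [OF P matrix_unit_carrier] in auto)

lemma mat_linear_diagonal_expand:
  assumes P: "mat_linear d P"
    and offdiag: "\<And>a b. a < d \<Longrightarrow> b < d \<Longrightarrow> a \<noteq> b \<Longrightarrow> P (matrix_unit d (a,b)) = 0\<^sub>m d d"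
    and A: "A \<in> carrier_mat d d"
  shows "P A = matsum d (\<lambda>i. A $$ (i,i) \<cdot>\<^sub>m P (proj d i)) {..<d}"
proof (rule eq_matI)
  fix x y assume "x < dim_row (matsum d (\<lambda>i. A $$ (i,i) \<cdot>\<^sub>m P (proj d i)) {..<d})"
    "y < dim_col (matsum d (\<lambda>i. A $$ (i,i) \<cdot>\<^sub>m P (proj d i)) {..<d})"
  then have xy: "x < d" "y < d"
    by simp_all
  have PE: "P (matrix_unit d p) \<in> carrier_mat d d" for p
    by (rule mat_linear_carrier [OF P matrix_unit_carrier])
  have "P A $$ (x,y) = (\<Sum>a<d. \<Sum>b<d. A $$ (a,b) * P (matrix_unit d (a,b)) $$ (x,y))"
    using xy by (simp add: mat_linear_expand [OF P A] sum.cartesian_product carrier_matD [OF PE])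
  also have "\<dots> = (\<Sum>a<d. \<Sum>b<d. if b = a then A $$ (a,a) * P (proj d a) $$ (x,y) else 0)"
    using xy by (intro sum.cong refl) (auto simp: offdiag proj_eq_matrix_unit)
  finally show "P A $$ (x,y) = matsum d (\<lambda>i. A $$ (i,i) \<cdot>\<^sub>m P (proj d i)) {..<d} $$ (x,y)"
    using xy by (simp add: carrier_matD [OF mat_linear_carrier [OF P proj_carrier]])
qed (use mat_linear_carrier [OF P A] in auto)

lemma weighted_sum_zero_imp_zero:
  fixes l f :: "'a \<Rightarrow> real"
  assumes "finite I" "\<And>i. i \<in> I \<Longrightarrow> 0 \<le> l i" "\<And>i. i \<in> I \<Longrightarrow> 0 \<le> f i"
    and "(\<Sum>i\<in>I. l i * f i) = 0" "i \<in> I" "0 < l i"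
  shows "f i = 0"
proof -
  have "l i * f i = 0"
    using assms(1-4) sum_nonneg_eq_0_iff [of I "\<lambda>i. l i * f i"] \<open>i \<in> I\<close> by auto
  with \<open>0 < l i\<close> show ?thesis
    by simp
qed

lemma decreasing_sum_one_first_ge:
  fixes s :: "nat \<Rightarrow> real"
  assumes "\<And>y. y \<le> j \<Longrightarrow> s y \<le> s 0" "(\<Sum>y\<le>j. s y) = 1"
  shows "1 / real (j+1) \<le> s 0"
proof -
  have "(\<Sum>y\<le>j. s y) \<le> (\<Sum>y\<le>j. s 0)"
    using assms(1) by (intro sum_mono) auto
  with assms(2) show ?thesis
    by (simp add: field_simps)
qed

lemma bounded_sum_one_uniform:
  fixes s :: "nat \<Rightarrow> real"
  assumes "\<And>y. y \<le> j \<Longrightarrow> s y \<le> 1 / real (j+1)" "(\<Sum>y\<le>j. s y) = 1" "x \<le> j"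
  shows "s x = 1 / real (j+1)"
proof (rule ccontr)
  assume "s x \<noteq> 1 / real (j+1)"
  with assms(1,3) have "(\<Sum>y\<le>j. s y) < (\<Sum>y\<le>j. 1 / real (j+1))"
    by (intro sum_strict_mono_ex1) (auto intro!: bexI [of _ x] simp: less_le)
  with assms(2) show False
    by simp
qed

text \<open>The distribution uniform on the first \<open>j+1\<close> levels (the spectrum of \<open>\<tau>\<^sub>j\<close>) is an extreme point
  of the non-increasing distributions: a tail-free mixture forces each component onto the first
  \<open>j+1\<close> levels, so its largest entry is at least \<open>1/(j+1)\<close>, with equality for the mixture.\<close>

lemma uniform_prefix_extreme:
  fixes s :: "nat \<Rightarrow> nat \<Rightarrow> real" and l :: "nat \<Rightarrow> real"
  assumes s_nonneg: "\<And>i x. i < n \<Longrightarrow> x < d \<Longrightarrow> 0 \<le> s i x"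
    and s_sum: "\<And>i. i < n \<Longrightarrow> (\<Sum>x<d. s i x) = 1"
    and s_decr: "\<And>i x y. i < n \<Longrightarrow> x \<le> y \<Longrightarrow> y < d \<Longrightarrow> s i y \<le> s i x"
    and l_nonneg: "\<And>i. i < n \<Longrightarrow> 0 \<le> l i" and l_sum: "(\<Sum>i<n. l i) = 1"
    and mix: "\<And>x. x < d \<Longrightarrow> (\<Sum>i<n. l i * s i x) = (if x \<le> j then 1 / real (j+1) else 0)"
    and "j < d" "i < n" "0 < l i" "x < d"
  shows "s i x = (if x \<le> j then 1 / real (j+1) else 0)"
proof -
  let ?u = "1 / real (j+1)"
  have tail: "s i' y = 0" if "i' < n" "0 < l i'" "j < y" "y < d" for i' y
    by (rule weighted_sum_zero_imp_zero [of "{..<n}" l "\<lambda>k. s k y"])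
      (use mix [of y] that s_nonneg l_nonneg in auto)
  have head: "(\<Sum>y\<le>j. s i' y) = 1" if "i' < n" "0 < l i'" for i'
  proof -
    have "{..<d} = {..j} \<union> {j<..<d}" "{..j} \<inter> {j<..<d} = {}"
      using \<open>j < d\<close> by auto
    with s_sum [OF that(1)] tail [OF that] show ?thesis
      by (simp add: sum.union_disjoint)
  qed
  have s0_ge: "?u \<le> s i' 0" if "i' < n" "0 < l i'" for i'
    using that \<open>j < d\<close> by (intro decreasing_sum_one_first_ge head s_decr) auto
  have weighted: "l i' * ?u \<le> l i' * s i' 0" if "i' < n" for i'
  proof (cases "l i' = 0")
    case False
    with s0_ge [OF that] l_nonneg [OF that] show ?thesis
      by (intro mult_left_mono) auto
  qed simp
  have s0: "s i 0 = ?u"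
  proof (rule ccontr)
    assume "s i 0 \<noteq> ?u"
    with s0_ge [OF \<open>i < n\<close> \<open>0 < l i\<close>] \<open>0 < l i\<close> have "l i * ?u < l i * s i 0"
      by (intro mult_strict_left_mono) auto
    with \<open>i < n\<close> weighted have "(\<Sum>k<n. l k * ?u) < (\<Sum>k<n. l k * s k 0)"
      by (intro sum_strict_mono_ex1) auto
    moreover have "(\<Sum>k<n. l k * s k 0) = (\<Sum>k<n. l k * ?u)"
      using mix [of 0] \<open>j < d\<close> l_sum by (simp add: sum_divide_distrib [symmetric])
    ultimately show False
      by simp
  qed
  have "s i y = ?u" if "y \<le> j" for y
    using s_decr [of i 0] s0 \<open>i < n\<close> \<open>j < d\<close> head [OF \<open>i < n\<close> \<open>0 < l i\<close>] that
    by (intro bounded_sum_one_uniform) auto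
  with tail [OF \<open>i < n\<close> \<open>0 < l i\<close>] \<open>x < d\<close> show ?thesis
    by auto
qed

lemma strict_mono_on_self_map_id:
  fixes f :: "nat \<Rightarrow> nat"
  assumes mono: "strict_mono_on {..<d} f" and bound: "\<And>i. i < d \<Longrightarrow> f i < d"
    and "i < d"
  shows "f i = i"
proof -
  have gap: "f i + (j - i) \<le> f j" if "i \<le> j" "j < d" for i j
    using that
  proof (induction j)
    case (Suc j)
    then show ?case
      using strict_mono_onD [OF mono, of j "Suc j"] by (cases "i = Suc j") (auto simp: Suc_diff_le)
  qed simp
  show ?thesis
    using gap [of 0 i] gap [of i "d - 1"] bound [of "d - 1"] \<open>i < d\<close> by linarith
qed

lemma characterizing_props_expand:
  assumes props: "characterizing_props d E P"
    and E: "strict_mono_on {..<d} E"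
    and "A \<in> carrier_mat d d"
  shows "P A = matsum d (\<lambda>i. A $$ (i,i) \<cdot>\<^sub>m P (proj d i)) {..<d}"
proof -
  have P: "mat_linear d P"
    using props by (simp add: characterizing_props_def quantum_channel_imp_mat_linear)
  have "P (matrix_unit d (a,b)) = 0\<^sub>m d d" if "a < d" "b < d" "a \<noteq> b" for a b
  proof (rule offdiag_matrix_unit_vanish [OF P])
    show "diagonal_mat (P \<rho>)" if "\<rho> \<in> states d" for \<rho>
      using props that passive_diagonal by (auto simp: characterizing_props_def activity_breaking_def)
    show "U_t d E t (P \<rho>) = P (U_t d E t \<rho>)" if "\<rho> \<in> carrier_mat d d" for t \<rho>
      using props that by (simp add: characterizing_props_def)
    show "E a \<noteq> E b"
      using strict_mono_on_eqD [OF E] \<open>a < d\<close> \<open>b < d\<close> \<open>a \<noteq> b\<close> by blast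
  qed fact+
  then show ?thesis
    by (rule mat_linear_diagonal_expand [OF P _ assms(3)])
qed

lemma Re_index_tau: "x < d \<Longrightarrow> Re (tau d j $$ (x,x)) = (if x \<le> j then 1 / real (j+1) else 0)"
  by (simp add: index_tau Re_divide_of_nat del: of_nat_Suc)

lemma passive_eq_tau:
  assumes "p \<in> passive_states d" "\<And>x. x < d \<Longrightarrow> Re (p $$ (x,x)) = Re (tau d j $$ (x,x))"
  shows "p = tau d j"
proof (rule eq_matI)
  have p: "p \<in> carrier_mat d d" "diagonal_mat p" "\<And>x. x < d \<Longrightarrow> 0 \<le> p $$ (x,x)"
    using passive_imp_state [OF assms(1)] passive_diagonal [OF assms(1)]
    by (auto simp: state_carrier state_diag_nonneg)
  fix x y assume "x < dim_row (tau d j)" "y < dim_col (tau d j)"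
  then have "x < d" "y < d"
    by simp_all
  then show "p $$ (x,y) = tau d j $$ (x,y)"
    using p assms(2) [of x] by (cases "x = y") (auto simp: diagonal_mat_def index_tau less_eq_complex_def complex_eq_iff)
qed (use state_carrier [OF passive_imp_state [OF assms(1)]] in auto)

lemma passive_mixture_eq_tau:
  assumes \<sigma>: "\<And>i. i < d \<Longrightarrow> \<sigma> i \<in> passive_states d" and \<rho>: "\<rho> \<in> states d" and "j < d"
    and mixture: "\<And>x. x < d \<Longrightarrow> tau d j $$ (x,x) = (\<Sum>i<d. \<rho> $$ (i,i) * \<sigma> i $$ (x,x))"
  shows "\<exists>i<d. \<sigma> i = tau d j"
proof -
  define l where "l i = Re (\<rho> $$ (i,i))" for i
  define s where "s i x = Re (\<sigma> i $$ (x,x))" for i x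
  have l_nonneg: "0 \<le> l i" if "i < d" for i
    using state_diag_nonneg [OF \<rho> that] by (simp add: l_def less_eq_complex_def)
  have l_sum: "(\<Sum>i<d. l i) = 1"
    using \<rho> state_carrier [OF \<rho>] by (simp add: states_def trace_def l_def flip: Re_sum)
  have "\<exists>i<d. 0 < l i"
  proof (rule ccontr)
    assume "\<not> (\<exists>i<d. 0 < l i)"
    then have "(\<Sum>i<d. l i) \<le> 0"
      by (intro sum_nonpos) auto
    with l_sum show False
      by simp
  qed
  then obtain i where i: "i < d" "0 < l i"
    by blast
  have \<sigma>_state: "\<sigma> i' \<in> states d" if "i' < d" for i'
    by (rule passive_imp_state [OF \<sigma> [OF that]])
  have "\<sigma> i = tau d j"
  proof (rule passive_eq_tau [OF \<sigma> [OF i(1)]])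
    fix x assume "x < d"
    have "s i x = (if x \<le> j then 1 / real (j+1) else 0)"
    proof (rule uniform_prefix_extreme [of d d s l])
      show "0 \<le> s i' y" if "i' < d" "y < d" for i' y
        using state_diag_nonneg [OF \<sigma>_state [OF that(1)] that(2)] by (simp add: s_def less_eq_complex_def)
      show "(\<Sum>y<d. s i' y) = 1" if "i' < d" for i'
        using \<sigma>_state [OF that] state_carrier [OF \<sigma>_state [OF that]]
        by (simp add: states_def trace_def s_def flip: Re_sum)
      show "s i' z \<le> s i' y" if "i' < d" "y \<le> z" "z < d" for i' y z
        using \<sigma> [OF that(1)] that(2,3) by (simp add: s_def passive_states_def)
      show "(\<Sum>i<d. l i * s i y) = (if y \<le> j then 1 / real (j+1) else 0)" if "y < d" for y
      proof -
        have "(\<Sum>i<d. \<rho> $$ (i,i) * \<sigma> i $$ (y,y)) = (\<Sum>i<d. complex_of_real (l i) * \<sigma> i $$ (y,y))"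
          using state_diag_nonneg [OF \<rho>]
          by (intro sum.cong) (auto simp: l_def less_eq_complex_def complex_eq_iff)
        with mixture [OF that] that show ?thesis
          by (simp add: s_def Re_sum flip: Re_index_tau)
      qed
    qed (use l_nonneg l_sum i \<open>j < d\<close> \<open>x < d\<close> in auto)
    with \<open>x < d\<close> show "Re (\<sigma> i $$ (x,x)) = Re (tau d j $$ (x,x))"
      by (simp add: s_def Re_index_tau)
  qed
  with i show ?thesis
    by blast
qed

lemma characterizing_props_tau_attained:
  assumes props: "characterizing_props d E P"
    and E: "strict_mono_on {..<d} E"
    and "j < d"
  shows "\<exists>i<d. P (proj d i) = tau d j"
proof -
  have \<sigma>: "P (proj d i) \<in> passive_states d" if "i < d" for i
    using props proj_state [OF that] by (auto simp: characterizing_props_def activity_breaking_def)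
  have "tau d j \<in> P ` states d"
    using props Pi_ch_passive [OF proj_state [OF \<open>j < d\<close>]] Pi_ch_proj [OF \<open>j < d\<close>]
    by (simp add: characterizing_props_def)
  then obtain \<rho> where \<rho>: "\<rho> \<in> states d" "P \<rho> = tau d j"
    by (auto simp: image_iff)
  show ?thesis
  proof (rule passive_mixture_eq_tau [OF \<sigma> \<rho>(1) \<open>j < d\<close>])
    fix x assume "x < d"
    then show "tau d j $$ (x,x) = (\<Sum>i<d. \<rho> $$ (i,i) * P (proj d i) $$ (x,x))"
      using characterizing_props_expand [OF props E state_carrier [OF \<rho>(1)]] \<rho>(2)
        carrier_matD [OF state_carrier [OF passive_imp_state [OF \<sigma>]]]
      by simp
  qed
qed

lemma Pi_ch_characterizing_props:
  assumes E: "strict_mono_on {..<d} E"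
  shows "characterizing_props d E (Pi_ch d)"
  unfolding characterizing_props_def activity_breaking_def
proof (intro conjI allI impI ballI)
  show "Pi_ch d ` states d = passive_states d"
    using Pi_ch_passive Pi_ch_surj by blast
  fix i j assume "i \<le> j" "j < d"
  then have "prefix_mean E i \<le> prefix_mean E j"
    using strict_mono_onD [OF prefix_mean_strict_mono [OF E], of i j] by (cases "i = j") auto
  with \<open>i \<le> j\<close> \<open>j < d\<close> show "Re (trace (hamiltonian d E * Pi_ch d (proj d i))) \<le>
      Re (trace (hamiltonian d E * Pi_ch d (proj d j)))"
    by (simp add: Pi_ch_proj energy_tau)
qed (simp_all add: Pi_ch_quantum_channel Pi_ch_passive Pi_ch_covariant)

lemma characterizing_props_proj:
  assumes props: "characterizing_props d E P"
    and E: "strict_mono_on {..<d} E"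
    and "j < d"
  shows "P (proj d j) = tau d j"
proof -
  define f where "f j = (SOME i. i < d \<and> P (proj d i) = tau d j)" for j
  have f: "f j < d" "P (proj d (f j)) = tau d j" if "j < d" for j
    using someI_ex [OF characterizing_props_tau_attained [OF props E that]] by (simp_all add: f_def)
  have "f j < f j'" if "j < j'" "j' < d" for j j'
  proof (rule ccontr)
    assume "\<not> f j < f j'"
    then have "Re (trace (hamiltonian d E * P (proj d (f j')))) \<le> Re (trace (hamiltonian d E * P (proj d (f j))))"
      using props f(1) [of j] that by (simp add: characterizing_props_def)
    then have "prefix_mean E j' \<le> prefix_mean E j"
      using f that by (simp add: energy_tau)
    with strict_mono_onD [OF prefix_mean_strict_mono [OF E], of j j'] that show False
      by simp
  qed
  then have "f j = j"
    using f \<open>j < d\<close> by (intro strict_mono_on_self_map_id [of d f] strict_mono_onI) auto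
  with f [OF \<open>j < d\<close>] show ?thesis
    by simp
qed

theorem mainTheorem18:
  fixes d :: nat and E :: "nat \<Rightarrow> real"
  assumes "d \<ge> 1"
    and "\<And>i j. i < j \<Longrightarrow> j < d \<Longrightarrow> E i < E j"
  shows "characterizing_props d E (Pi_ch d) \<and>
         (\<forall>P. characterizing_props d E P \<longrightarrow> (\<forall>\<rho> \<in> carrier_mat d d. P \<rho> = Pi_ch d \<rho>))"
proof (intro conjI allI impI ballI)
  have E: "strict_mono_on {..<d} E"
    using assms(2) by (intro strict_mono_onI) auto
  then show "characterizing_props d E (Pi_ch d)"
    by (rule Pi_ch_characterizing_props)
  fix P and \<rho> :: "complex mat" assume props: "characterizing_props d E P" and "\<rho> \<in> carrier_mat d d"
  then have "P \<rho> = matsum d (\<lambda>i. \<rho> $$ (i,i) \<cdot>\<^sub>m P (proj d i)) {..<d}"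
    by (rule characterizing_props_expand [OF _ E])
  also have "\<dots> = matsum d (\<lambda>i. \<rho> $$ (i,i) \<cdot>\<^sub>m tau d i) {..<d}"
    unfolding matsum_def using characterizing_props_proj [OF props E] by simp
  finally show "P \<rho> = Pi_ch d \<rho>"
    by (simp add: Pi_ch_def)
qed

end
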